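(* Let $(X,d)$ be a metric space and let $F$ be a semiflow on $X$ with strong compact dynamics. Then: (1) $\mathcal R_{\mathcal C}=\mathcal R_{\mathcal S}$; denote this common set by $\mathcal R$. (2) For all $x,y\in\mathcal R$, one has $x\succcurlyeq_{\mathcal C} y$ if and only if $x\succcurlyeq_{\mathcal S} y$. (3) A set $M\subset X$ is a Conley node if and only if it is a shadow node. (4) The graphs coincide: $\Gamma_{\mathcal C}=\Gamma_{\mathcal S}$.
   Context: A semiflow on a metric space $(X,d)$ is a continuous map $F:[0,\infty)\times X\to X$, $(t,x)\mapsto F^t(x)$, with $F^0=\mathrm{id}$ and $F^{t+s}=F^t\circ F^s$ for all $t,s\ge 0$. A curve is piecewise continuous if it is continuous except at finitely many points, at which one-sided limits exist. Conley chains: for $\varepsilon>0$, $T>0$, an $(\varepsilon,T)$-chain from $x$ to $y$ is a finite sequence $x=x_0,x_1,\dots,x_N=y$ in $X$ with times $t_i\ge T$ such that $d(F^{t_i}(x_i),x_{i+1})<\varepsilon$ for $i=0,\dots,N-1$. Write $x\succcurlyeq_{\mathcal C} y$ if for every $\varepsilon>0$ and $T>0$ there is an $(\varepsilon,T)$-chain from $x$ to $y$. Shadow chains: for $T\ge1$, a piecewise continuous curve $\gamma:[0,T]\to X$ is $\varepsilon$-close to $F$ if $d(\gamma(t+\tau),F^\tau(\gamma(t)))<\varepsilon$ for every $\tau\in[0,1]$ and $t\in[0,T-\tau]$. An $\varepsilon$-chain (shadow chain) from $x$ to $y$ is a piecewise continuous $\gamma:[0,T]\to X$, $T\ge 1$,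 with $\gamma(0)=x$, $\gamma(T)=y$, $\gamma$ $\varepsilon$-close to $F$. Write $x\succcurlyeq_{\mathcal S} y$ if for every $\varepsilon>0$ there is an $\varepsilon$-chain from $x$ to $y$. For $\star\in\{\mathcal C,\mathcal S\}$: a point $x$ is $\star$-chain-recurrent if either $x$ is a fixed point of $F$ or there is $y\in X$ with $x\succcurlyeq_\star y$ and $y\succcurlyeq_\star x$ (such $x,y$ are called $\star$-chain-equivalent); $\mathcal R_\star$ is the set of $\star$-chain-recurrent points. A $\star$-node (Conley node for $\mathcal C$, shadow node for $\mathcal S$) is a maximal subset of $\mathcal R_\star$ whose points are mutually $\star$-chain-equivalent. $\Gamma_\star$ is the directed graph whose vertices are the $\star$-nodes, with an edge from node $M$ to node $N$ iff there are $x\in M$, $y\in N$ with $x\succcurlyeq_\star y$. Compact dynamics: for $G\subset X$, $N_\varepsilon(G)=\{y: d(y,G)<\varepsilon\}$ and $W_\varepsilon(G)=\bigcup_{t\ge0}F^t(N_\varepsilon(G))$. A set $G$ attracts $K$ if for every $\varepsilon>0$ there is $T>0$ with $F^t(K)\subset N_\varepsilon(G)$ for all $t\ge T$. The global attractor $\mathcal G$ of $F$, if it exists, is a maximal invariant compact subset of $X$ attracting every compact $K\subset X$. It is strong if there is $\varepsilon>0$ such that $\mathcal G$ attracts $N_\varepsilon(\mathcal G)$ and the map $(t,z)\mapsto F^t(z)$ is uniformly continuous on $[0,1]\times W_\varepsilon(\mathcal G)$. $F$ has strong compact dynamics if it has a strong global attractor. *)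

theory Defs
  imports "HOL-Analysis.Analysis"
begin

definition semiflow :: "(real \<Rightarrow> 'a::metric_space \<Rightarrow> 'a) \<Rightarrow> bool" where
  "semiflow F \<longleftrightarrow>
     continuous_on ({0..} \<times> UNIV) (\<lambda>(t, x). F t x) \<and>
     (\<forall>x. F 0 x = x) \<and>
     (\<forall>t s x. t \<ge> 0 \<longrightarrow> s \<ge> 0 \<longrightarrow> F (t + s) x = F t (F s x))"

definition piecewise_continuous :: "real \<Rightarrow> (real \<Rightarrow> 'a::metric_space) \<Rightarrow> bool" where
  "piecewise_continuous T \<gamma> \<longleftrightarrow>
     (\<exists>S. finite S \<and>
        (\<forall>t\<in>{0..T} - S. continuous (at t within {0..T}) \<gamma>) \<and>
        (\<forall>s\<in>S \<inter> {0..T}.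
           (0 < s \<longrightarrow> (\<exists>l. (\<gamma> \<longlongrightarrow> l) (at_left s))) \<and>
           (s < T \<longrightarrow> (\<exists>l. (\<gamma> \<longlongrightarrow> l) (at_right s)))))"

definition conley_chain ::
  "(real \<Rightarrow> 'a::metric_space \<Rightarrow> 'a) \<Rightarrow> real \<Rightarrow> real \<Rightarrow> 'a \<Rightarrow> 'a \<Rightarrow> bool" where
  "conley_chain F \<epsilon> T x y \<longleftrightarrow>
     (\<exists>N::nat. \<exists>xs::nat \<Rightarrow> 'a. \<exists>ts::nat \<Rightarrow> real.
        N \<ge> 1 \<and> xs 0 = x \<and> xs N = y \<and>
        (\<forall>i<N. ts i \<ge> T \<and> dist (F (ts i) (xs i)) (xs (Suc i)) < \<epsilon>))"

definition conley_le :: "(real \<Rightarrow> 'a::metric_space \<Rightarrow> 'a) \<Rightarrow> 'a \<Rightarrow> 'a \<Rightarrow> bool" where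
  "conley_le F x y \<longleftrightarrow> (\<forall>\<epsilon>>0. \<forall>T>0. conley_chain F \<epsilon> T x y)"

definition eps_close :: "(real \<Rightarrow> 'a::metric_space \<Rightarrow> 'a) \<Rightarrow> real \<Rightarrow> real \<Rightarrow> (real \<Rightarrow> 'a) \<Rightarrow> bool" where
  "eps_close F \<epsilon> T \<gamma> \<longleftrightarrow>
     (\<forall>\<tau>\<in>{0..1}. \<forall>t\<in>{0..T - \<tau>}. dist (\<gamma> (t + \<tau>)) (F \<tau> (\<gamma> t)) < \<epsilon>)"

definition shadow_chain :: "(real \<Rightarrow> 'a::metric_space \<Rightarrow> 'a) \<Rightarrow> real \<Rightarrow> 'a \<Rightarrow> 'a \<Rightarrow> bool" where
  "shadow_chain F \<epsilon> x y \<longleftrightarrow>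
     (\<exists>T \<gamma>. T \<ge> 1 \<and> piecewise_continuous T \<gamma> \<and> \<gamma> 0 = x \<and> \<gamma> T = y \<and> eps_close F \<epsilon> T \<gamma>)"

definition shadow_le :: "(real \<Rightarrow> 'a::metric_space \<Rightarrow> 'a) \<Rightarrow> 'a \<Rightarrow> 'a \<Rightarrow> bool" where
  "shadow_le F x y \<longleftrightarrow> (\<forall>\<epsilon>>0. shadow_chain F \<epsilon> x y)"

definition fixed_point :: "(real \<Rightarrow> 'a \<Rightarrow> 'a) \<Rightarrow> 'a \<Rightarrow> bool" where
  "fixed_point F x \<longleftrightarrow> (\<forall>t\<ge>0. F t x = x)"

definition chain_recurrent_set :: "(real \<Rightarrow> 'a \<Rightarrow> 'a) \<Rightarrow> ('a \<Rightarrow> 'a \<Rightarrow> bool) \<Rightarrow> 'a set" where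
  "chain_recurrent_set F rel = {x. fixed_point F x \<or> (\<exists>y. rel x y \<and> rel y x)}"

definition mutually_equiv :: "('a \<Rightarrow> 'a \<Rightarrow> bool) \<Rightarrow> 'a set \<Rightarrow> bool" where
  "mutually_equiv rel M \<longleftrightarrow> (\<forall>x\<in>M. \<forall>y\<in>M. rel x y \<and> rel y x)"

definition is_node :: "(real \<Rightarrow> 'a \<Rightarrow> 'a) \<Rightarrow> ('a \<Rightarrow> 'a \<Rightarrow> bool) \<Rightarrow> 'a set \<Rightarrow> bool" where
  "is_node F rel M \<longleftrightarrow>
     M \<noteq> {} \<and> M \<subseteq> chain_recurrent_set F rel \<and> mutually_equiv rel M \<and>
     (\<forall>M'. M \<subseteq> M' \<and> M' \<subseteq> chain_recurrent_set F rel \<and> mutually_equiv rel M' \<longrightarrow> M' = M)"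

definition chain_graph :: "(real \<Rightarrow> 'a \<Rightarrow> 'a) \<Rightarrow> ('a \<Rightarrow> 'a \<Rightarrow> bool) \<Rightarrow> 'a set set \<times> ('a set \<times> 'a set) set" where
  "chain_graph F rel =
     ({M. is_node F rel M},
      {(M, N). is_node F rel M \<and> is_node F rel N \<and> (\<exists>x\<in>M. \<exists>y\<in>N. rel x y)})"

definition nbhd :: "real \<Rightarrow> 'a::metric_space set \<Rightarrow> 'a set" where
  "nbhd \<epsilon> G = {y. \<exists>g\<in>G. dist y g < \<epsilon>}"

definition W_set :: "(real \<Rightarrow> 'a::metric_space \<Rightarrow> 'a) \<Rightarrow> real \<Rightarrow> 'a set \<Rightarrow> 'a set" where
  "W_set F \<epsilon> G = (\<Union>t\<in>{0..}. F t ` nbhd \<epsilon> G)"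

definition attracts :: "(real \<Rightarrow> 'a::metric_space \<Rightarrow> 'a) \<Rightarrow> 'a set \<Rightarrow> 'a set \<Rightarrow> bool" where
  "attracts F G K \<longleftrightarrow> (\<forall>\<epsilon>>0. \<exists>T>0. \<forall>t\<ge>T. F t ` K \<subseteq> nbhd \<epsilon> G)"

definition invariant :: "(real \<Rightarrow> 'a \<Rightarrow> 'a) \<Rightarrow> 'a set \<Rightarrow> bool" where
  "invariant F G \<longleftrightarrow> (\<forall>t\<ge>0. F t ` G = G)"

definition global_attractor :: "(real \<Rightarrow> 'a::metric_space \<Rightarrow> 'a) \<Rightarrow> 'a set \<Rightarrow> bool" where
  "global_attractor F G \<longleftrightarrow>
     invariant F G \<and> compact G \<and>
     (\<forall>K. invariant F K \<and> compact K \<and> G \<subseteq> K \<longrightarrow> K = G) \<and>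
     (\<forall>K. compact K \<longrightarrow> attracts F G K)"

definition strong_global_attractor :: "(real \<Rightarrow> 'a::metric_space \<Rightarrow> 'a) \<Rightarrow> 'a set \<Rightarrow> bool" where
  "strong_global_attractor F G \<longleftrightarrow>
     global_attractor F G \<and>
     (\<exists>\<epsilon>>0. attracts F G (nbhd \<epsilon> G) \<and>
        uniformly_continuous_on ({0..1} \<times> W_set F \<epsilon> G) (\<lambda>(t, z). F t z))"

definition strong_compact_dynamics :: "(real \<Rightarrow> 'a::metric_space \<Rightarrow> 'a) \<Rightarrow> bool" where
  "strong_compact_dynamics F \<longleftrightarrow> (\<exists>G. strong_global_attractor F G)"

end

theory Submission
  imports Defs
begin

text \<open>
  Chains with long flight times end close to the attractor G, so Conley-recurrent points
  lie in G, and a Conley chain starting in G stays near G.  There the flow is uniformly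
  continuous, so gluing the orbit segments of the chain gives a curve that is
  \<open>\<epsilon>\<close>-close to F: a shadow chain.
  Conversely, sampling a shadow chain with mesh in [1/2,1] gives a pseudo-orbit with small
  jumps, which for a recurrent point can be made arbitrarily long.  Grouping its steps into
  blocks of bounded length but long duration, finite-time tracking turns each block into a
  single jump of a Conley chain: along the compact orbit piece of the starting point for
  the first block, and near the Lyapunov stable set G for all later ones.
  Nodes and graphs only depend on the recurrent set and on the chain relation restricted
  to it.
\<close>

section \<open>Neighbourhoods and piecewise continuous curves\<close>

lemma nbhd_mono: "e \<le> e' \<Longrightarrow> nbhd e A \<subseteq> nbhd e' A"
  unfolding nbhd_def by force

lemma subset_nbhd: "0 < e \<Longrightarrow> A \<subseteq> nbhd e A"
  unfolding nbhd_def by force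

lemma nbhd_triangle:
  assumes "z \<in> nbhd a A" and "dist z w < b"
  shows "w \<in> nbhd (a + b) A"
proof -
  obtain y where "y \<in> A" "dist z y < a"
    using assms(1) unfolding nbhd_def by blast
  moreover have "dist w y \<le> dist z w + dist z y"
    by (rule dist_triangle3)
  ultimately show ?thesis
    using assms(2) unfolding nbhd_def by force
qed

lemma mem_closed_if_in_nbhds:
  assumes "closed A" and "\<And>e. 0 < e \<Longrightarrow> x \<in> nbhd e A"
  shows "x \<in> A"
proof -
  have "\<exists>y\<in>A. dist y x < e" if "0 < e" for e
    using assms(2)[OF that] unfolding nbhd_def by (auto simp: dist_commute)
  then show ?thesis
    using closed_approachable[OF assms(1)] by blast
qed

lemma segment_exists:
  fixes c :: "nat \<Rightarrow> real"
  assumes "c 0 \<le> t" and "t < c N"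
  shows "\<exists>i<N. c i \<le> t \<and> t < c (Suc i)"
  using assms
proof (induction N)
  case (Suc N)
  then show ?case by (cases "t < c N") (auto intro: less_SucI)
qed simp

definition segment_index :: "(nat \<Rightarrow> real) \<Rightarrow> real \<Rightarrow> nat" where
  "segment_index c t = (LEAST i. t < c (Suc i))"

lemma segment_index_bounds:
  fixes c :: "nat \<Rightarrow> real"
  assumes incr: "\<And>i. c i + 1 \<le> c (Suc i)" and "c 0 \<le> t"
  shows "c (segment_index c t) \<le> t" and "t < c (Suc (segment_index c t))"
proof -
  have "c 0 + real i \<le> c i" for i
  proof (induction i)
    case (Suc i)
    then show ?case using incr[of i] by simp
  qed simp
  moreover obtain k :: nat where "t - c 0 < real k"
    using reals_Archimedean2 by blast
  ultimately have "t < c (Suc k)"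
    using incr[of k] by (smt (verit))
  then show "t < c (Suc (segment_index c t))"
    unfolding segment_index_def by (rule LeastI)
  show "c (segment_index c t) \<le> t"
  proof (cases "segment_index c t")
    case (Suc j)
    then have "\<not> t < c (Suc j)"
      unfolding segment_index_def by (metis lessI not_less_Least)
    then show ?thesis using Suc by simp
  qed (use assms(2) in simp)
qed

lemma segment_index_eq:
  fixes c :: "nat \<Rightarrow> real"
  assumes "incseq c" and "c i \<le> t" and "t < c (Suc i)"
  shows "segment_index c t = i"
  unfolding segment_index_def
proof (rule Least_equality)
  fix j assume "t < c (Suc j)"
  show "i \<le> j"
  proof (rule ccontr)
    assume "\<not> i \<le> j"
    then have "c (Suc j) \<le> c i" using \<open>incseq c\<close> by (simp add: incseq_def)
    then show False using assms(2) \<open>t < c (Suc j)\<close> by simp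
  qed
qed (use assms(3) in simp)

lemma one_sided_limits_on_segment:
  fixes g :: "real \<Rightarrow> 'a::metric_space"
  assumes "a < b" and "continuous_on {a..b} g" and "\<And>u. u \<in> {a<..<b} \<Longrightarrow> \<gamma> u = g u"
  shows "(\<gamma> \<longlongrightarrow> g a) (at_right a)" and "(\<gamma> \<longlongrightarrow> g b) (at_left b)"
proof -
  have "\<forall>\<^sub>F u in at_right a. g u = \<gamma> u" "\<forall>\<^sub>F u in at_left b. g u = \<gamma> u"
    using eventually_at_right_real[OF assms(1)] eventually_at_left_real[OF assms(1)]
    by (auto elim!: eventually_mono simp: assms(3))
  moreover have "(g \<longlongrightarrow> g a) (at a within {a..b})" "(g \<longlongrightarrow> g b) (at b within {a..b})"
    using assms(1,2) unfolding continuous_on_def by auto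
  then have "(g \<longlongrightarrow> g a) (at_right a)" "(g \<longlongrightarrow> g b) (at_left b)"
    using assms(1) by (simp_all add: at_within_Icc_at_right at_within_Icc_at_left)
  ultimately show "(\<gamma> \<longlongrightarrow> g a) (at_right a)" "(\<gamma> \<longlongrightarrow> g b) (at_left b)"
    using Lim_transform_eventually by blast+
qed

lemma piecewise_continuous_segments:
  fixes c :: "nat \<Rightarrow> real" and g :: "nat \<Rightarrow> real \<Rightarrow> 'a::metric_space"
  assumes c0: "c 0 = 0" and cN: "c N = T"
    and incr: "\<And>i. i < N \<Longrightarrow> c i < c (Suc i)"
    and cont: "\<And>i. i < N \<Longrightarrow> continuous_on {c i..c (Suc i)} (g i)"
    and piece: "\<And>i t. i < N \<Longrightarrow> t \<in> {c i..<c (Suc i)} \<Longrightarrow> \<gamma> t = g i t"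
  shows "piecewise_continuous T \<gamma>"
  unfolding piecewise_continuous_def
proof (intro exI[of _ "c ` {..N}"] conjI ballI impI)
  show "finite (c ` {..N})" by simp
next
  fix t assume t: "t \<in> {0..T} - c ` {..N}"
  then obtain i where i: "i < N" "c i \<le> t" "t < c (Suc i)"
    using segment_exists[of c t N] c0 cN by force
  with t have "c i < t" by (metis DiffD2 imageI atMost_iff less_imp_le_nat order_le_less)
  have "continuous_on {c i<..<c (Suc i)} (g i)"
    using cont[OF i(1)] by (rule continuous_on_subset) auto
  then have "isCont (g i) t"
    using \<open>c i < t\<close> i(3) by (simp add: continuous_on_eq_continuous_at)
  then have "(g i \<longlongrightarrow> g i t) (at t within {0..T})"
    using continuous_at_imp_continuous_within continuous_within by blast
  then have "(\<gamma> \<longlongrightarrow> g i t) (at t within {0..T})"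
    by (rule Lim_transform_within_open[where s="{c i<..<c (Suc i)}"])
      (use \<open>c i < t\<close> i piece in auto)
  then show "continuous (at t within {0..T}) \<gamma>"
    using piece[OF i(1)] i by (simp add: continuous_within)
next
  fix s assume "s \<in> c ` {..N} \<inter> {0..T}"
  then obtain j where j: "j \<le> N" "s = c j" by auto
  show "\<exists>l. (\<gamma> \<longlongrightarrow> l) (at_left s)" if "0 < s"
  proof -
    obtain i where i: "j = Suc i" using \<open>0 < s\<close> j c0 by (cases j) auto
    then have "i < N" using j(1) by simp
    then have "(\<gamma> \<longlongrightarrow> g i (c j)) (at_left (c j))"
      using one_sided_limits_on_segment(2)[OF incr cont] piece i by auto
    then show ?thesis using j(2) by blast
  qed
  show "\<exists>l. (\<gamma> \<longlongrightarrow> l) (at_right s)" if "s < T"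
  proof -
    have "j < N" using \<open>s < T\<close> j cN by (cases "j = N") auto
    then have "(\<gamma> \<longlongrightarrow> g j (c j)) (at_right (c j))"
      using one_sided_limits_on_segment(1)[OF incr cont] piece by auto
    then show ?thesis using j(2) by blast
  qed
qed

section \<open>Chains\<close>

lemma chain_append:
  fixes P :: "'a \<Rightarrow> 'b \<Rightarrow> 'a \<Rightarrow> bool"
  assumes "\<forall>i<n1. P (p1 i) (s1 i) (p1 (Suc i))" and "\<forall>i<n2. P (p2 i) (s2 i) (p2 (Suc i))"
    and "p1 n1 = p2 0"
  shows "\<exists>p s. p 0 = p1 0 \<and> p (n1 + n2) = p2 n2 \<and> (\<forall>i<n1 + n2. P (p i) (s i) (p (Suc i)))"
proof -
  define p where "p i = (if i \<le> n1 then p1 i else p2 (i - n1))" for i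
  define s where "s i = (if i < n1 then s1 i else s2 (i - n1))" for i
  have "P (p i) (s i) (p (Suc i))" if "i < n1 + n2" for i
  proof (cases "i < n1")
    case True
    then show ?thesis using assms(1,3) unfolding p_def s_def by auto
  next
    case False
    then have "p i = p2 (i - n1)" "p (Suc i) = p2 (Suc (i - n1))" "s i = s2 (i - n1)"
      using assms(3) unfolding p_def s_def by (auto simp: Suc_diff_le)
    moreover have "i - n1 < n2" using that False by simp
    ultimately show ?thesis using assms(2) by auto
  qed
  moreover have "p 0 = p1 0" "p (n1 + n2) = p2 n2"
    using assms(3) unfolding p_def by auto
  ultimately show ?thesis by blast
qed

lemma chain_relation_by_blocks:
  fixes p :: "nat \<Rightarrow> 'a"
  assumes trans: "\<And>x y z. R x y \<Longrightarrow> R y z \<Longrightarrow> R x z"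
    and block: "\<And>k l. k + l \<le> n \<Longrightarrow> q \<le> l \<Longrightarrow> l \<le> 2 * q \<Longrightarrow> p k \<in> S \<Longrightarrow>
                  R (p k) (p (k + l)) \<and> p (k + l) \<in> S"
    and "0 < q" and "k + q \<le> n" and "p k \<in> S"
  shows "R (p k) (p n)"
  using assms(4,5)
proof (induction "n - k" arbitrary: k rule: less_induct)
  case less
  show ?case
  proof (cases "n \<le> k + 2 * q")
    case True
    then show ?thesis using block[of k "n - k"] less.prems by simp
  next
    case False
    then have "R (p k) (p (k + q))" "p (k + q) \<in> S"
      using block[of k q] less.prems by auto
    moreover have "R (p (k + q)) (p n)"
      using less.hyps[of "k + q"] False \<open>0 < q\<close> \<open>p (k + q) \<in> S\<close> by simp
    ultimately show ?thesis using trans by blast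
  qed
qed

lemma conley_chain_trans:
  assumes "conley_chain F \<epsilon> T x y" and "conley_chain F \<epsilon> T y z"
  shows "conley_chain F \<epsilon> T x z"
proof -
  obtain n1 p1 s1 where 1: "1 \<le> n1" "p1 0 = x" "p1 n1 = y"
    "\<forall>i<n1. T \<le> s1 i \<and> dist (F (s1 i) (p1 i)) (p1 (Suc i)) < \<epsilon>"
    using assms(1) unfolding conley_chain_def by blast
  obtain n2 p2 s2 where 2: "1 \<le> n2" "p2 0 = y" "p2 n2 = z"
    "\<forall>i<n2. T \<le> s2 i \<and> dist (F (s2 i) (p2 i)) (p2 (Suc i)) < \<epsilon>"
    using assms(2) unfolding conley_chain_def by blast
  show ?thesis
    using chain_append[where P="\<lambda>u t v. T \<le> t \<and> dist (F t u) v < \<epsilon>", OF 1(4) 2(4)] 1 2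
    unfolding conley_chain_def by (metis trans_le_add1)
qed

lemma conley_chain_single: "T \<le> t \<Longrightarrow> dist (F t x) y < \<epsilon> \<Longrightarrow> conley_chain F \<epsilon> T x y"
  unfolding conley_chain_def
  by (intro exI[of _ "1::nat"] exI[of _ "\<lambda>i. if i = 0 then x else y"] exI[of _ "\<lambda>_. t"]) auto

lemma conley_jump_into_nbhd:
  assumes "T \<le> t" and "F t z \<in> nbhd (d/2) A" and "dist y (F t z) < \<tau>"
    and "\<tau> \<le> \<epsilon>" and "\<tau> \<le> d/2"
  shows "conley_chain F \<epsilon> T z y \<and> y \<in> nbhd d A"
proof
  have "dist (F t z) y < \<tau>"
    using assms(3) by (simp add: dist_commute)
  then have "dist (F t z) y < \<epsilon>"
    using assms(4) by simp
  then show "conley_chain F \<epsilon> T z y"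
    by (rule conley_chain_single[OF assms(1)])
  have "y \<in> nbhd (d/2 + \<tau>) A"
    using assms(2) \<open>dist (F t z) y < \<tau>\<close> by (rule nbhd_triangle)
  then show "y \<in> nbhd d A"
    using nbhd_mono[of "d/2 + \<tau>" d A] assms(5) by auto
qed

definition pseudo_orbit :: "(real \<Rightarrow> 'a::metric_space \<Rightarrow> 'a) \<Rightarrow> real \<Rightarrow> nat \<Rightarrow> (nat \<Rightarrow> real) \<Rightarrow> (nat \<Rightarrow> 'a) \<Rightarrow> bool" where
  "pseudo_orbit F \<delta> n s p \<longleftrightarrow> (\<forall>i<n. s i \<in> {0..1} \<and> dist (F (s i) (p i)) (p (Suc i)) < \<delta>)"

lemma pseudo_orbit_mono:
  "pseudo_orbit F \<delta> n s p \<Longrightarrow> m \<le> n \<Longrightarrow> \<delta> \<le> \<delta>' \<Longrightarrow> pseudo_orbit F \<delta>' m s p"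
  unfolding pseudo_orbit_def by (meson less_le_trans order_less_le_trans)

lemma pseudo_orbit_shift:
  "pseudo_orbit F \<delta> n s p \<Longrightarrow> pseudo_orbit F \<delta> (n - k) (\<lambda>i. s (k + i)) (\<lambda>i. p (k + i))"
  unfolding pseudo_orbit_def by auto

text \<open>The discrete skeleton of a shadow chain, through which shadow chains are turned
  into Conley chains.\<close>

definition step_chain :: "(real \<Rightarrow> 'a::metric_space \<Rightarrow> 'a) \<Rightarrow> real \<Rightarrow> nat \<Rightarrow> 'a \<Rightarrow> 'a \<Rightarrow> bool" where
  "step_chain F \<epsilon> L x y \<longleftrightarrow>
     (\<exists>n p s. L \<le> n \<and> p 0 = x \<and> p n = y \<and>
        (\<forall>i<n. s i \<in> {1/2..1} \<and> dist (F (s i) (p i)) (p (Suc i)) < \<epsilon>))"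

lemma step_chain_mono: "step_chain F \<epsilon> L x y \<Longrightarrow> L' \<le> L \<Longrightarrow> step_chain F \<epsilon> L' x y"
  unfolding step_chain_def using order_trans by blast

lemma step_chain_trans:
  assumes "step_chain F \<epsilon> L1 x y" and "step_chain F \<epsilon> L2 y z"
  shows "step_chain F \<epsilon> (L1 + L2) x z"
proof -
  obtain n1 p1 s1 where 1: "L1 \<le> n1" "p1 0 = x" "p1 n1 = y"
    "\<forall>i<n1. s1 i \<in> {1/2..1} \<and> dist (F (s1 i) (p1 i)) (p1 (Suc i)) < \<epsilon>"
    using assms(1) unfolding step_chain_def by blast
  obtain n2 p2 s2 where 2: "L2 \<le> n2" "p2 0 = y" "p2 n2 = z"
    "\<forall>i<n2. s2 i \<in> {1/2..1} \<and> dist (F (s2 i) (p2 i)) (p2 (Suc i)) < \<epsilon>"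
    using assms(2) unfolding step_chain_def by blast
  show ?thesis
    using chain_append[where P="\<lambda>u t v. t \<in> {1/2..1} \<and> dist (F t u) v < \<epsilon>", OF 1(4) 2(4)] 1 2
    unfolding step_chain_def by (metis add_le_mono)
qed

lemma step_chain_loop: "step_chain F \<epsilon> 1 x x \<Longrightarrow> step_chain F \<epsilon> L x x"
proof (induction L)
  case 0
  show ?case
    unfolding step_chain_def by (intro exI[of _ "0::nat"] exI[of _ "\<lambda>_. x"]) auto
next
  case (Suc L)
  then show ?case using step_chain_trans[of F \<epsilon> L x x 1 x] by simp
qed

lemma shadow_chain_imp_step_chain:
  assumes "shadow_chain F \<epsilon> x y"
  shows "step_chain F \<epsilon> 1 x y"
proof -
  obtain T \<gamma> where \<gamma>: "1 \<le> T" "\<gamma> 0 = x" "\<gamma> T = y" "eps_close F \<epsilon> T \<gamma>"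
    using assms unfolding shadow_chain_def by blast
  define n where "n = nat \<lceil>T\<rceil>"
  have n: "T \<le> real n" "real n < T + 1" "1 \<le> n"
    using \<gamma>(1) unfolding n_def by linarith+
  define h where "h = T / real n"
  have h: "1/2 \<le> h" "h \<le> 1" "real n * h = T"
    using n \<gamma>(1) unfolding h_def by (auto simp: field_simps)
  have "dist (F h (\<gamma> (real i * h))) (\<gamma> (real (Suc i) * h)) < \<epsilon>" if "i < n" for i
  proof -
    have "real (Suc i) * h \<le> real n * h"
      using that h by (intro mult_right_mono) auto
    then have "real i * h \<in> {0..T - h}" using h by (auto simp: algebra_simps)
    moreover have "h \<in> {0..1}" using h by auto
    ultimately have "dist (\<gamma> (real i * h + h)) (F h (\<gamma> (real i * h))) < \<epsilon>"
      using \<gamma>(4) unfolding eps_close_def by blast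
    then show ?thesis by (simp add: algebra_simps dist_commute)
  qed
  then show ?thesis unfolding step_chain_def using n h \<gamma>
    by (intro exI[of _ n] exI[of _ "\<lambda>i. \<gamma> (real i * h)"] exI[of _ "\<lambda>_. h"]) auto
qed

lemma sum_half_steps_ge:
  assumes "\<And>i. i < l \<Longrightarrow> 1/2 \<le> s i"
  shows "real l / 2 \<le> (\<Sum>k<l. s k)"
  using sum_bounded_below[of "{..<l}" "1/2" s] assms by simp

lemma chain_enters_nbhd:
  assumes attr: "\<forall>t\<ge>T. \<forall>z\<in>nbhd e A. F t z \<in> nbhd \<eta> A" and "\<eta> + \<epsilon> \<le> e"
    and first: "F (ts 0) (xs 0) \<in> nbhd \<eta> A"
    and chain: "\<forall>i<N. T \<le> ts i \<and> dist (F (ts i) (xs i)) (xs (Suc i)) < \<epsilon>"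
    and "0 < i" and "i \<le> N"
  shows "xs i \<in> nbhd (\<eta> + \<epsilon>) A"
proof -
  obtain j where "i = Suc j" using \<open>0 < i\<close> gr0_implies_Suc by blast
  have "xs (Suc j) \<in> nbhd (\<eta> + \<epsilon>) A" if "Suc j \<le> N" for j
    using that
  proof (induction j)
    case 0
    then show ?case using first chain nbhd_triangle by fastforce
  next
    case (Suc j)
    then have "xs (Suc j) \<in> nbhd e A" using nbhd_mono[OF \<open>\<eta> + \<epsilon> \<le> e\<close>] by auto
    then have "F (ts (Suc j)) (xs (Suc j)) \<in> nbhd \<eta> A" using attr chain Suc.prems by auto
    moreover have "dist (F (ts (Suc j)) (xs (Suc j))) (xs (Suc (Suc j))) < \<epsilon>"
      using chain Suc.prems by auto
    ultimately show ?case by (rule nbhd_triangle)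
  qed
  then show ?thesis using \<open>i = Suc j\<close> \<open>i \<le> N\<close> by simp
qed

lemma shadow_le_imp_step_chain:
  assumes "shadow_le F x y" and "0 < \<epsilon>"
  shows "step_chain F \<epsilon> 1 x y"
proof -
  have "shadow_chain F \<epsilon> x y"
    using assms unfolding shadow_le_def by blast
  then show ?thesis
    by (rule shadow_chain_imp_step_chain)
qed

lemma shadow_recurrent_step_loop:
  assumes "x \<in> chain_recurrent_set F (shadow_le F)" and "0 < \<epsilon>"
  shows "step_chain F \<epsilon> 1 x x"
proof (cases "fixed_point F x")
  case True
  then show ?thesis unfolding step_chain_def fixed_point_def using assms(2)
    by (intro exI[of _ "1::nat"] exI[of _ "\<lambda>_. x"] exI[of _ "\<lambda>_. 1::real"]) auto
next
  case False
  then obtain y where "shadow_le F x y" "shadow_le F y x"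
    using assms(1) unfolding chain_recurrent_set_def by blast
  then have "step_chain F \<epsilon> (1 + 1) x x"
    using shadow_le_imp_step_chain[OF _ assms(2)] step_chain_trans by blast
  then show ?thesis
    by (rule step_chain_mono) simp
qed

lemma shadow_le_imp_long_step_chains:
  assumes "x \<in> chain_recurrent_set F (shadow_le F)" and "shadow_le F x y" and "0 < \<epsilon>"
  shows "step_chain F \<epsilon> L x y"
proof -
  have "step_chain F \<epsilon> L x x"
    using shadow_recurrent_step_loop[OF assms(1,3)] by (rule step_chain_loop)
  then have "step_chain F \<epsilon> (L + 1) x y"
    using shadow_le_imp_step_chain[OF assms(2,3)] by (rule step_chain_trans)
  then show ?thesis
    by (rule step_chain_mono) simp
qed

section \<open>Gluing orbit segments and tracking pseudo-orbits\<close>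

locale semiflow_system =
  fixes F :: "real \<Rightarrow> 'a::metric_space \<Rightarrow> 'a"
  assumes semiflow: "semiflow F"
begin

lemma flow_0 [simp]: "F 0 x = x"
  using semiflow unfolding semiflow_def by auto

lemma flow_add: "0 \<le> t \<Longrightarrow> 0 \<le> s \<Longrightarrow> F (t + s) x = F t (F s x)"
  using semiflow unfolding semiflow_def by auto

lemma continuous_on_flow: "continuous_on ({0..} \<times> UNIV) (\<lambda>(t, x). F t x)"
  using semiflow unfolding semiflow_def by auto

lemma continuous_on_orbit: "continuous_on {0..} (\<lambda>t. F t x)"
proof -
  have "continuous_on {0..} ((\<lambda>(t, x). F t x) \<circ> (\<lambda>t. (t, x)))"
    by (rule continuous_on_compose)
      (auto intro!: continuous_on_Pair continuous_on_subset[OF continuous_on_flow])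
  then show ?thesis by (simp add: o_def)
qed

definition orbit_curve :: "(nat \<Rightarrow> real) \<Rightarrow> (nat \<Rightarrow> 'a) \<Rightarrow> real \<Rightarrow> 'a" where
  "orbit_curve c xs t = F (t - c (segment_index c t)) (xs (segment_index c t))"

context
  fixes c :: "nat \<Rightarrow> real"
  assumes c0: "c 0 = 0" and incr: "\<And>i. c i + 1 \<le> c (Suc i)"
begin

lemma incseq_times: "incseq c"
  using incr by (intro incseq_SucI) (smt (verit))

lemma orbit_curve_piece: "c i \<le> t \<Longrightarrow> t < c (Suc i) \<Longrightarrow> orbit_curve c xs t = F (t - c i) (xs i)"
  unfolding orbit_curve_def using segment_index_eq[OF incseq_times] by simp

lemma orbit_curve_ends: "orbit_curve c xs 0 = xs 0" "orbit_curve c xs (c N) = xs N"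
  using orbit_curve_piece[of 0 0] orbit_curve_piece[of N "c N"] incr[of 0] incr[of N] c0 by simp_all

lemma piecewise_continuous_orbit_curve: "piecewise_continuous (c N) (orbit_curve c xs)"
proof (rule piecewise_continuous_segments[where g="\<lambda>i u. F (u - c i) (xs i)"])
  show "c i < c (Suc i)" for i
    using incr[of i] by simp
  show "continuous_on {c i..c (Suc i)} (\<lambda>u. F (u - c i) (xs i))" for i
    by (rule continuous_on_compose2[OF continuous_on_orbit]) (auto intro!: continuous_on_diff)
qed (auto simp: c0 intro: orbit_curve_piece)

lemma eps_close_orbit_curve:
  assumes "0 < \<epsilon>"
    and jump: "\<And>i r. i < N \<Longrightarrow> r \<in> {0..1} \<Longrightarrow>
      dist (F r (xs (Suc i))) (F r (F (c (Suc i) - c i) (xs i))) < \<epsilon>"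
  shows "eps_close F \<epsilon> (c N) (orbit_curve c xs)"
  unfolding eps_close_def
proof (intro ballI)
  fix \<tau> t assume \<tau>: "\<tau> \<in> {0..1::real}" and t: "t \<in> {0..c N - \<tau>}"
  define i where "i = segment_index c t"
  have i: "c i \<le> t" "t < c (Suc i)"
    using segment_index_bounds[where c=c and t=t, OF incr] c0 t unfolding i_def by auto
  have flow_t: "F \<tau> (orbit_curve c xs t) = F (t + \<tau> - c i) (xs i)"
    using orbit_curve_piece[OF i] flow_add[of \<tau> "t - c i"] \<tau> i by (simp add: algebra_simps)
  show "dist (orbit_curve c xs (t + \<tau>)) (F \<tau> (orbit_curve c xs t)) < \<epsilon>"
  proof (cases "t + \<tau> < c (Suc i)")
    case True
    then show ?thesis using orbit_curve_piece[of i "t + \<tau>"] flow_t i \<tau> \<open>0 < \<epsilon>\<close> by simp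
  next
    case False
    have "i < N"
    proof (rule ccontr)
      assume "\<not> i < N"
      then have "c N \<le> c i" using incseq_times by (simp add: incseq_def)
      then show False using False t incr[of i] by simp
    qed
    define r where "r = t + \<tau> - c (Suc i)"
    have r: "0 \<le> r" "r < 1" "t + \<tau> - c i = r + (c (Suc i) - c i)"
      using False i \<tau> unfolding r_def by auto
    have "orbit_curve c xs (t + \<tau>) = F r (xs (Suc i))"
      using orbit_curve_piece[of "Suc i" "t + \<tau>"] r incr[of "Suc i"] unfolding r_def by simp
    moreover have "F \<tau> (orbit_curve c xs t) = F (r + (c (Suc i) - c i)) (xs i)"
      by (simp only: flow_t r(3))
    then have "F \<tau> (orbit_curve c xs t) = F r (F (c (Suc i) - c i) (xs i))"
      using flow_add r(1) incr[of i] by simp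
    ultimately show ?thesis using jump[OF \<open>i < N\<close>, of r] r by simp
  qed
qed

end

lemma shadow_chain_of_orbit_segments:
  fixes xs :: "nat \<Rightarrow> 'a" and ts :: "nat \<Rightarrow> real"
  assumes "0 < \<epsilon>" and "1 \<le> N" and ts: "\<And>i. i < N \<Longrightarrow> 1 \<le> ts i"
    and jump: "\<And>i r. i < N \<Longrightarrow> r \<in> {0..1} \<Longrightarrow> dist (F r (xs (Suc i))) (F r (F (ts i) (xs i))) < \<epsilon>"
  shows "shadow_chain F \<epsilon> (xs 0) (xs N)"
proof -
  \<comment> \<open>Only the times below N matter; the max makes c grow by at least 1 at every index.\<close>
  define c where "c i = (\<Sum>k<i. max 1 (ts k))" for i
  have c: "c 0 = 0" "\<And>i. c i + 1 \<le> c (Suc i)"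
    by (simp_all add: c_def)
  have "c (Suc i) - c i = ts i" if "i < N" for i
    using ts[OF that] by (simp add: c_def)
  then have "eps_close F \<epsilon> (c N) (orbit_curve c xs)"
    using eps_close_orbit_curve[where c=c, OF c \<open>0 < \<epsilon>\<close>] jump by simp
  moreover have "1 \<le> c N"
  proof -
    have "c 1 \<le> c N"
      using incseq_times[where c=c, OF c] \<open>1 \<le> N\<close> by (simp add: incseq_def)
    then show ?thesis using c(1) c(2)[of 0] by simp
  qed
  ultimately show ?thesis
    unfolding shadow_chain_def
    using piecewise_continuous_orbit_curve[where c=c, OF c] orbit_curve_ends[where c=c, OF c] by blast
qed

text \<open>The modulus of continuity is only available on A; the hypothesis absorb keeps the
  pseudo-orbit in A as long as it stays \<open>\<tau>\<close>-close to the true orbit, which runs in B.\<close>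

lemma pseudo_orbit_tracking:
  assumes modulus: "\<And>\<eta>. 0 < \<eta> \<Longrightarrow>
      \<exists>\<delta>>0. \<forall>a\<in>{0..1}. \<forall>z\<in>A. \<forall>w\<in>B. dist z w < \<delta> \<longrightarrow> dist (F a z) (F a w) < \<eta>"
    and absorb: "\<And>z w. w \<in> B \<Longrightarrow> dist z w < \<tau> \<Longrightarrow> z \<in> A"
    and "0 < \<tau>"
  shows "\<exists>\<delta>>0. \<forall>m\<le>M. \<forall>p s. pseudo_orbit F \<delta> m s p \<longrightarrow> (\<forall>i<m. F (\<Sum>k<i. s k) (p 0) \<in> B) \<longrightarrow>
           dist (p m) (F (\<Sum>k<m. s k) (p 0)) < \<tau>"
proof -
  have "\<exists>\<delta>>0. \<forall>m\<le>M. \<forall>p s. pseudo_orbit F \<delta> m s p \<longrightarrow> (\<forall>i<m. F (\<Sum>k<i. s k) (p 0) \<in> B) \<longrightarrow>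
           dist (p m) (F (\<Sum>k<m. s k) (p 0)) < \<tau>'"
    if "0 < \<tau>'" "\<tau>' \<le> \<tau>" for \<tau>'
    using that
  proof (induction M arbitrary: \<tau>')
    case 0
    then show ?case by (intro exI[of _ 1]) auto
  next
    case (Suc M)
    obtain \<delta>1 where \<delta>1: "0 < \<delta>1"
      "\<forall>a\<in>{0..1}. \<forall>z\<in>A. \<forall>w\<in>B. dist z w < \<delta>1 \<longrightarrow> dist (F a z) (F a w) < \<tau>'/2"
      using modulus[of "\<tau>'/2"] Suc.prems by auto
    have "0 < min \<delta>1 \<tau>'" "min \<delta>1 \<tau>' \<le> \<tau>"
      using \<delta>1(1) Suc.prems by auto
    then obtain \<delta>2 where \<delta>2: "0 < \<delta>2"
      "\<forall>m\<le>M. \<forall>p s. pseudo_orbit F \<delta>2 m s p \<longrightarrow> (\<forall>i<m. F (\<Sum>k<i. s k) (p 0) \<in> B) \<longrightarrow>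
         dist (p m) (F (\<Sum>k<m. s k) (p 0)) < min \<delta>1 \<tau>'"
      by (rule Suc.IH[elim_format]) blast
    show ?case
    proof (intro exI[of _ "min \<delta>2 (\<tau>'/2)"] conjI allI impI)
      show "0 < min \<delta>2 (\<tau>'/2)" using \<delta>2(1) Suc.prems by simp
      fix m p s
      assume "m \<le> Suc M" and po: "pseudo_orbit F (min \<delta>2 (\<tau>'/2)) m s p"
        and orbit_B: "\<forall>i<m. F (\<Sum>k<i. s k) (p 0) \<in> B"
      let ?orbit = "\<lambda>m. F (\<Sum>k<m. s k) (p 0)"
      show "dist (p m) (?orbit m) < \<tau>'"
      proof (cases "m \<le> M")
        case True
        have "pseudo_orbit F \<delta>2 m s p"
          using pseudo_orbit_mono[OF po order_refl, of \<delta>2] by simp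
        then have "dist (p m) (?orbit m) < min \<delta>1 \<tau>'"
          using \<delta>2(2) True orbit_B by blast
        then show ?thesis by simp
      next
        case False
        then have m: "m = Suc M" using \<open>m \<le> Suc M\<close> by simp
        have last_step: "s M \<in> {0..1}" "dist (F (s M) (p M)) (p (Suc M)) < \<tau>'/2"
          using po m unfolding pseudo_orbit_def by auto
        have "pseudo_orbit F \<delta>2 M s p"
          using pseudo_orbit_mono[OF po, of M \<delta>2] m by simp
        then have close: "dist (p M) (?orbit M) < min \<delta>1 \<tau>'"
          using \<delta>2(2) orbit_B m by auto
        moreover have "?orbit M \<in> B" using orbit_B m by simp
        moreover have "p M \<in> A"
          using absorb[OF \<open>?orbit M \<in> B\<close>, of "p M"] close Suc.prems(2) by simp
        ultimately have "dist (F (s M) (p M)) (F (s M) (?orbit M)) < \<tau>'/2"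
          using \<delta>1(2) last_step(1) by auto
        moreover have "F (s M) (?orbit M) = ?orbit (Suc M)"
          using flow_add[of "s M" "\<Sum>k<M. s k"] last_step(1) sum_nonneg[of "{..<M}" s] po m
          unfolding pseudo_orbit_def by (simp add: add.commute)
        ultimately show ?thesis
          using last_step(2) m by (metis dist_triangle_half_r)
      qed
    qed
  qed
  then show ?thesis using \<open>0 < \<tau>\<close> by blast
qed

lemma flow_modulus_at_compact:
  assumes "compact K" and "0 < \<eta>"
  shows "\<exists>\<delta>>0. \<forall>a\<in>{0..1}. \<forall>z. \<forall>w\<in>K. dist z w < \<delta> \<longrightarrow> dist (F a z) (F a w) < \<eta>"
proof -
  let ?f = "\<lambda>(t, x). F t x"
  let ?S = "{0..1::real} \<times> K"
  have "\<forall>q\<in>?S. \<exists>r. 0 < r \<and> (\<forall>q'\<in>{0..} \<times> UNIV. dist q' q < r \<longrightarrow> dist (?f q') (?f q) < \<eta>/2)"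
  proof
    fix q assume "q \<in> ?S"
    then have "continuous (at q within {0..} \<times> UNIV) ?f"
      using continuous_on_flow continuous_on_eq_continuous_within by force
    moreover have "0 < \<eta>/2" using \<open>0 < \<eta>\<close> by simp
    ultimately show "\<exists>r. 0 < r \<and> (\<forall>q'\<in>{0..} \<times> UNIV. dist q' q < r \<longrightarrow> dist (?f q') (?f q) < \<eta>/2)"
      unfolding continuous_within_eps_delta by blast
  qed
  then obtain r where r: "\<forall>q\<in>?S. 0 < r q \<and>
      (\<forall>q'\<in>{0..} \<times> UNIV. dist q' q < r q \<longrightarrow> dist (?f q') (?f q) < \<eta>/2)"
    by (rule bchoice[elim_format]) blast
  have compact: "compact ?S" using assms(1) by (simp add: compact_Times)
  have cover: "?S \<subseteq> \<Union>((\<lambda>q. ball q (r q)) ` ?S)" using r by force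
  have "\<And>B. B \<in> (\<lambda>q. ball q (r q)) ` ?S \<Longrightarrow> open B" by auto
  then obtain e where e: "0 < e" "\<And>q. q \<in> ?S \<Longrightarrow> \<exists>B\<in>(\<lambda>q. ball q (r q)) ` ?S. ball q e \<subseteq> B"
    using Heine_Borel_lemma[OF compact cover] by blast
  show ?thesis
  proof (intro exI[of _ e] conjI ballI allI impI)
    fix a z w assume a: "a \<in> {0..1::real}" and "w \<in> K" "dist z w < e"
    then obtain q' where q': "q' \<in> ?S" "ball (a, w) e \<subseteq> ball q' (r q')"
      using e(2)[of "(a, w)"] by auto
    have "(a, z) \<in> ball (a, w) e" "(a, w) \<in> ball (a, w) e"
      using \<open>dist z w < e\<close> e(1) by (simp_all add: dist_Pair_Pair dist_commute)
    then have "dist q' (a, z) < r q'" "dist q' (a, w) < r q'"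
      using q'(2) by (meson mem_ball subsetD)+
    then have "dist (F a z) (?f q') < \<eta>/2" "dist (F a w) (?f q') < \<eta>/2"
      using r q'(1) a by (auto simp: dist_commute)
    then show "dist (F a z) (F a w) < \<eta>"
      by (rule dist_triangle_half_l)
  qed (use e in auto)
qed

lemma sum_step_times_bounds:
  assumes "\<And>i. i < l \<Longrightarrow> s i \<in> {0..1}"
  shows "0 \<le> (\<Sum>k<l. s k)" and "(\<Sum>k<l. s k) \<le> real l"
  using sum_nonneg[of "{..<l}" s] sum_bounded_above[of "{..<l}" s 1] assms by auto

lemma orbit_tracking:
  assumes "0 < \<tau>"
  shows "\<exists>\<delta>>0. \<forall>m\<le>M. \<forall>p s. p 0 = x \<longrightarrow> pseudo_orbit F \<delta> m s p \<longrightarrow>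
           dist (p m) (F (\<Sum>k<m. s k) x) < \<tau>"
proof -
  define K where "K = (\<lambda>t. F t x) ` {0..real M}"
  have "compact K" unfolding K_def
    by (rule compact_continuous_image[OF continuous_on_subset[OF continuous_on_orbit]]) auto
  obtain \<delta> where \<delta>: "0 < \<delta>"
    "\<forall>m\<le>M. \<forall>p s. pseudo_orbit F \<delta> m s p \<longrightarrow> (\<forall>i<m. F (\<Sum>k<i. s k) (p 0) \<in> K) \<longrightarrow>
       dist (p m) (F (\<Sum>k<m. s k) (p 0)) < \<tau>"
    using pseudo_orbit_tracking[of UNIV K \<tau> M] flow_modulus_at_compact[OF \<open>compact K\<close>] assms
    by auto
  have "F (\<Sum>k<i. s k) x \<in> K" if "pseudo_orbit F \<delta> m s p" "i < m" "m \<le> M" for m p s i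
    using sum_step_times_bounds[of i s] that unfolding K_def pseudo_orbit_def by force
  then show ?thesis using \<delta> by blast
qed

end

section \<open>Dynamics near a strong attractor\<close>

locale strong_attractor = semiflow_system F for F :: "real \<Rightarrow> 'a::metric_space \<Rightarrow> 'a" +
  fixes G :: "'a set" and e0 :: real
  assumes global_attractor: "global_attractor F G"
    and e0_pos: "0 < e0"
    and attracts_nbhd: "attracts F G (nbhd e0 G)"
    and uniformly_continuous_near: "uniformly_continuous_on ({0..1} \<times> W_set F e0 G) (\<lambda>(t, z). F t z)"
begin

abbreviation W where "W \<equiv> W_set F e0 G"

lemma attractor_invariant: "0 \<le> t \<Longrightarrow> g \<in> G \<Longrightarrow> F t g \<in> G"
  using global_attractor unfolding global_attractor_def invariant_def by blast

lemma closed_attractor: "closed G"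
  using global_attractor compact_imp_closed unfolding global_attractor_def by blast

lemma fixed_point_in_attractor:
  assumes "fixed_point F x"
  shows "x \<in> G"
proof -
  have "invariant F (insert x G)"
    using global_attractor assms unfolding global_attractor_def invariant_def fixed_point_def
    by (metis image_insert)
  moreover have "compact (insert x G)"
    using global_attractor unfolding global_attractor_def by auto
  ultimately have "insert x G = G"
    using global_attractor unfolding global_attractor_def by blast
  then show ?thesis by blast
qed

lemma nbhd_subset_W: "nbhd e0 G \<subseteq> W"
  unfolding W_set_def by force

lemma W_forward:
  assumes "z \<in> W" and "0 \<le> t"
  shows "F t z \<in> W"
proof -
  obtain s w where "0 \<le> s" "w \<in> nbhd e0 G" "z = F s w"
    using assms(1) unfolding W_set_def by auto
  then have "F t z = F (t + s) w" using flow_add assms(2) by simp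
  then show ?thesis
    unfolding W_set_def using \<open>0 \<le> s\<close> assms(2) \<open>w \<in> nbhd e0 G\<close> by (auto intro!: bexI[of _ "t + s"])
qed

lemma flow_modulus_W:
  assumes "0 < \<eta>"
  shows "\<exists>\<delta>>0. \<forall>a\<in>{0..1}. \<forall>z\<in>W. \<forall>w\<in>W. dist z w < \<delta> \<longrightarrow> dist (F a z) (F a w) < \<eta>"
proof -
  obtain \<delta> where "0 < \<delta>" "\<forall>q\<in>{0..1} \<times> W. \<forall>q'\<in>{0..1} \<times> W. dist q' q < \<delta> \<longrightarrow>
      dist ((\<lambda>(t, z). F t z) q') ((\<lambda>(t, z). F t z) q) < \<eta>"
    using uniformly_continuous_near assms unfolding uniformly_continuous_on_def by blast
  then show ?thesis
    by (intro exI[of _ \<delta>]) (force simp: dist_Pair_Pair)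
qed

lemma flow_modulus_W_up_to:
  assumes "0 < \<eta>"
  shows "\<exists>\<delta>>0. \<forall>t\<in>{0..real n}. \<forall>z\<in>W. \<forall>w\<in>W. dist z w < \<delta> \<longrightarrow> dist (F t z) (F t w) < \<eta>"
  using assms
proof (induction n arbitrary: \<eta>)
  case 0
  then show ?case by (intro exI[of _ \<eta>]) auto
next
  case (Suc n)
  obtain \<delta>1 where \<delta>1: "0 < \<delta>1"
    "\<forall>t\<in>{0..real n}. \<forall>z\<in>W. \<forall>w\<in>W. dist z w < \<delta>1 \<longrightarrow> dist (F t z) (F t w) < \<eta>"
    using Suc by blast
  obtain \<delta>2 where \<delta>2: "0 < \<delta>2"
    "\<forall>a\<in>{0..1}. \<forall>z\<in>W. \<forall>w\<in>W. dist z w < \<delta>2 \<longrightarrow> dist (F a z) (F a w) < \<delta>1"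
    using flow_modulus_W[OF \<delta>1(1)] by blast
  obtain \<delta>3 where \<delta>3: "0 < \<delta>3"
    "\<forall>a\<in>{0..1}. \<forall>z\<in>W. \<forall>w\<in>W. dist z w < \<delta>3 \<longrightarrow> dist (F a z) (F a w) < \<eta>"
    using flow_modulus_W[OF Suc.prems] by blast
  show ?case
  proof (intro exI[of _ "min \<delta>2 \<delta>3"] conjI ballI impI)
    fix t z w assume t: "t \<in> {0..real (Suc n)}" and zw: "z \<in> W" "w \<in> W" "dist z w < min \<delta>2 \<delta>3"
    show "dist (F t z) (F t w) < \<eta>"
    proof (cases "t \<le> 1")
      case True
      then show ?thesis using \<delta>3(2) t zw by auto
    next
      case False
      then have "F t z = F (t - 1) (F 1 z)" "F t w = F (t - 1) (F 1 w)"
        using flow_add[of "t - 1" 1] by auto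
      moreover have "dist (F 1 z) (F 1 w) < \<delta>1" using \<delta>2(2) zw by auto
      moreover have "F 1 z \<in> W" "F 1 w \<in> W" using W_forward zw by auto
      moreover have "t - 1 \<in> {0..real n}" using t False by auto
      ultimately show ?thesis using \<delta>1(2) by auto
    qed
  qed (use \<delta>2 \<delta>3 in auto)
qed

lemma attraction_nbhd: "0 < \<eta> \<Longrightarrow> \<exists>T>0. \<forall>t\<ge>T. \<forall>z\<in>nbhd e0 G. F t z \<in> nbhd \<eta> G"
  using attracts_nbhd unfolding attracts_def by blast

lemma attraction_point: "0 < \<eta> \<Longrightarrow> \<exists>T>0. \<forall>t\<ge>T. F t x \<in> nbhd \<eta> G"
  using global_attractor unfolding global_attractor_def attracts_def
  by (metis compact_sing image_insert insert_subset)

lemma attractor_stable: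
  assumes "0 < \<eta>"
  shows "\<exists>\<delta>>0. \<forall>t\<ge>0. \<forall>z\<in>nbhd \<delta> G. F t z \<in> nbhd \<eta> G"
proof -
  obtain T where T: "\<forall>t\<ge>T. \<forall>z\<in>nbhd e0 G. F t z \<in> nbhd \<eta> G"
    using attraction_nbhd[OF assms] by blast
  obtain n :: nat where "T \<le> real n" using real_arch_simple by blast
  obtain \<delta> where \<delta>: "0 < \<delta>"
    "\<forall>t\<in>{0..real n}. \<forall>z\<in>W. \<forall>w\<in>W. dist z w < \<delta> \<longrightarrow> dist (F t z) (F t w) < \<eta>"
    using flow_modulus_W_up_to[OF assms] by blast
  show ?thesis
  proof (intro exI[of _ "min \<delta> e0"] conjI allI impI ballI)
    fix t :: real and z assume "0 \<le> t" and z: "z \<in> nbhd (min \<delta> e0) G"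
    then have "z \<in> nbhd e0 G" using nbhd_mono[of "min \<delta> e0" e0] by auto
    show "F t z \<in> nbhd \<eta> G"
    proof (cases "T \<le> t")
      case True
      then show ?thesis using T \<open>z \<in> nbhd e0 G\<close> by blast
    next
      case False
      obtain g where g: "g \<in> G" "dist z g < min \<delta> e0"
        using z unfolding nbhd_def by auto
      then have "g \<in> W" "z \<in> W"
        using subset_nbhd[OF e0_pos] nbhd_subset_W \<open>z \<in> nbhd e0 G\<close> by auto
      then have "dist (F t z) (F t g) < \<eta>"
        using \<delta>(2) g \<open>0 \<le> t\<close> False \<open>T \<le> real n\<close> by auto
      moreover have "F t g \<in> G" using attractor_invariant \<open>0 \<le> t\<close> g(1) by blast
      ultimately show ?thesis unfolding nbhd_def by auto
    qed
  qed (use \<delta> e0_pos in auto)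
qed

lemma conley_le_imp_mem_attractor:
  assumes "conley_le F y x"
  shows "x \<in> G"
proof (rule mem_closed_if_in_nbhds[OF closed_attractor])
  fix \<eta> :: real assume "0 < \<eta>"
  define \<epsilon> where "\<epsilon> = min \<eta> e0 / 2"
  have \<epsilon>: "0 < \<epsilon>" "\<epsilon> + \<epsilon> \<le> e0" "\<epsilon> + \<epsilon> \<le> \<eta>"
    using \<open>0 < \<eta>\<close> e0_pos unfolding \<epsilon>_def by auto
  obtain T1 where T1: "0 < T1" "\<forall>t\<ge>T1. \<forall>z\<in>nbhd e0 G. F t z \<in> nbhd \<epsilon> G"
    using attraction_nbhd[OF \<epsilon>(1)] by blast
  obtain Ty where Ty: "\<forall>t\<ge>Ty. F t y \<in> nbhd \<epsilon> G"
    using attraction_point[OF \<epsilon>(1)] by blast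
  have "conley_chain F \<epsilon> (max Ty T1) y x"
    using assms \<epsilon>(1) T1(1) unfolding conley_le_def by (simp add: less_max_iff_disj)
  then obtain N xs ts where chain: "1 \<le> N" "xs 0 = y" "xs N = x"
    "\<forall>i<N. max Ty T1 \<le> ts i \<and> dist (F (ts i) (xs i)) (xs (Suc i)) < \<epsilon>"
    unfolding conley_chain_def by blast
  have "xs N \<in> nbhd (\<epsilon> + \<epsilon>) G"
  proof (rule chain_enters_nbhd[where T="max Ty T1" and e=e0])
    show "\<forall>t\<ge>max Ty T1. \<forall>z\<in>nbhd e0 G. F t z \<in> nbhd \<epsilon> G" using T1 by simp
    show "F (ts 0) (xs 0) \<in> nbhd \<epsilon> G" using Ty chain by auto
  qed (use \<epsilon> chain in auto)
  then show "x \<in> nbhd \<eta> G"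
    using chain(3) nbhd_mono[OF \<epsilon>(3)] by auto
qed

lemma conley_chain_from_attractor:
  assumes "x \<in> G" and "conley_le F x y" and "0 < e"
  obtains N xs ts where "1 \<le> N" "xs 0 = x" "xs N = y"
    and "\<forall>i<N. 1 \<le> ts i \<and> dist (F (ts i) (xs i)) (xs (Suc i)) < e" and "\<forall>i\<le>N. xs i \<in> W"
proof -
  obtain T1 where T1: "0 < T1" "\<forall>t\<ge>T1. \<forall>z\<in>nbhd e0 G. F t z \<in> nbhd (e0/2) G"
    using attraction_nbhd[of "e0/2"] e0_pos by auto
  define e' where "e' = min e (e0/2)"
  have e': "0 < e'" "e' \<le> e" "e0/2 + e' \<le> e0"
    unfolding e'_def using assms(3) e0_pos by auto
  have "conley_chain F e' (max 1 T1) x y"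
    using assms(2) e'(1) unfolding conley_le_def by (simp add: less_max_iff_disj)
  then obtain N xs ts where chain: "1 \<le> N" "xs 0 = x" "xs N = y"
    "\<forall>i<N. max 1 T1 \<le> ts i \<and> dist (F (ts i) (xs i)) (xs (Suc i)) < e'"
    unfolding conley_chain_def by blast
  have "xs i \<in> W" if "i \<le> N" for i
  proof (cases "i = 0")
    case True
    then show ?thesis using assms(1) chain(2) subset_nbhd[OF e0_pos] nbhd_subset_W by auto
  next
    case False
    have "xs i \<in> nbhd (e0/2 + e') G"
    proof (rule chain_enters_nbhd[where T="max 1 T1" and e=e0])
      have "F (ts 0) (xs 0) \<in> G"
        using attractor_invariant[OF _ assms(1)] chain(1,2,4) by force
      then show "F (ts 0) (xs 0) \<in> nbhd (e0/2) G"
        using subset_nbhd[of "e0/2" G] e0_pos by auto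
    qed (use T1 e' chain False that in auto)
    then show ?thesis using nbhd_mono[OF e'(3)] nbhd_subset_W by auto
  qed
  moreover have "\<forall>i<N. 1 \<le> ts i \<and> dist (F (ts i) (xs i)) (xs (Suc i)) < e"
    using chain(4) e'(2) by fastforce
  ultimately show ?thesis
    using that chain(1-3) by blast
qed

lemma conley_le_imp_shadow_le:
  assumes "x \<in> G" and "conley_le F x y"
  shows "shadow_le F x y"
  unfolding shadow_le_def
proof (intro allI impI)
  fix \<epsilon> :: real assume "0 < \<epsilon>"
  obtain \<delta> where \<delta>: "0 < \<delta>" "\<forall>a\<in>{0..1}. \<forall>z\<in>W. \<forall>w\<in>W. dist z w < \<delta> \<longrightarrow> dist (F a z) (F a w) < \<epsilon>"
    using flow_modulus_W[OF \<open>0 < \<epsilon>\<close>] by blast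
  obtain N xs ts where chain: "1 \<le> N" "xs 0 = x" "xs N = y"
    "\<forall>i<N. 1 \<le> ts i \<and> dist (F (ts i) (xs i)) (xs (Suc i)) < \<delta>" "\<forall>i\<le>N. xs i \<in> W"
    using conley_chain_from_attractor[OF assms \<delta>(1)] by metis
  have "shadow_chain F \<epsilon> (xs 0) (xs N)"
  proof (rule shadow_chain_of_orbit_segments[OF \<open>0 < \<epsilon>\<close> chain(1)])
    show "1 \<le> ts i" if "i < N" for i
      using chain(4) that by blast
    fix i and r :: real assume "i < N" "r \<in> {0..1}"
    then have "F (ts i) (xs i) \<in> W" "xs (Suc i) \<in> W"
      using chain(4,5) W_forward[of "xs i" "ts i"] by auto
    moreover have "dist (xs (Suc i)) (F (ts i) (xs i)) < \<delta>"
      using chain(4) \<open>i < N\<close> by (auto simp: dist_commute)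
    ultimately show "dist (F r (xs (Suc i))) (F r (F (ts i) (xs i))) < \<epsilon>"
      using \<delta>(2) \<open>r \<in> {0..1}\<close> by blast
  qed
  then show "shadow_chain F \<epsilon> x y"
    using chain(2,3) by simp
qed

lemma near_attractor_tracking:
  assumes stable: "\<And>t z. 0 \<le> t \<Longrightarrow> z \<in> nbhd d G \<Longrightarrow> F t z \<in> nbhd (e0/2) G"
    and "0 < \<tau>" and "\<tau> \<le> e0/2"
  shows "\<exists>\<delta>>0. \<forall>m\<le>M. \<forall>p s. p 0 \<in> nbhd d G \<longrightarrow> pseudo_orbit F \<delta> m s p \<longrightarrow>
           dist (p m) (F (\<Sum>k<m. s k) (p 0)) < \<tau>"
proof -
  have "nbhd (e0/2) G \<subseteq> W"
    using nbhd_mono[of "e0/2" e0 G] nbhd_subset_W e0_pos by auto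
  then have "\<exists>\<delta>>0. \<forall>a\<in>{0..1}. \<forall>z\<in>W. \<forall>w\<in>nbhd (e0/2) G. dist z w < \<delta> \<longrightarrow> dist (F a z) (F a w) < \<eta>"
    if "0 < \<eta>" for \<eta>
    using flow_modulus_W[OF that] by blast
  moreover have "z \<in> W" if "w \<in> nbhd (e0/2) G" "dist z w < \<tau>" for z w
    using nbhd_triangle[OF that(1), of z \<tau>] that(2) \<open>\<tau> \<le> e0/2\<close> nbhd_mono[of "e0/2 + \<tau>" e0 G]
      nbhd_subset_W by (auto simp: dist_commute)
  ultimately obtain \<delta> where \<delta>: "0 < \<delta>"
    "\<forall>m\<le>M. \<forall>p s. pseudo_orbit F \<delta> m s p \<longrightarrow> (\<forall>i<m. F (\<Sum>k<i. s k) (p 0) \<in> nbhd (e0/2) G) \<longrightarrow>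
       dist (p m) (F (\<Sum>k<m. s k) (p 0)) < \<tau>"
    using pseudo_orbit_tracking[of W "nbhd (e0/2) G" \<tau> M] \<open>0 < \<tau>\<close> by blast
  have "F (\<Sum>k<i. s k) (p 0) \<in> nbhd (e0/2) G"
    if "p 0 \<in> nbhd d G" "pseudo_orbit F \<delta> m s p" "i < m" for p s m i
    using stable sum_step_times_bounds(1)[of i s] that unfolding pseudo_orbit_def by simp
  then show ?thesis using \<delta> by blast
qed

text \<open>Blocks of q to 2q steps last longer than T and Ta; stability keeps the true orbits of
  the blocks within e0/2 of G, where the flow is uniformly continuous, so every block is one
  jump of a Conley chain and lands again within d of G.\<close>

lemma near_attractor_blocks:
  assumes "0 < \<epsilon>" and "0 < T"
  shows "\<exists>d>0. \<exists>\<delta>>0. \<exists>q>0. \<forall>l p s. pseudo_orbit F \<delta> l s p \<longrightarrow> (\<forall>i<l. 1/2 \<le> s i) \<longrightarrow>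
           q \<le> l \<longrightarrow> l \<le> 2 * q \<longrightarrow> p 0 \<in> nbhd d G \<longrightarrow>
           conley_chain F \<epsilon> T (p 0) (p l) \<and> p l \<in> nbhd d G"
proof -
  obtain d0 where d0: "0 < d0" "\<forall>t\<ge>0. \<forall>z\<in>nbhd d0 G. F t z \<in> nbhd (e0/2) G"
    using attractor_stable[of "e0/2"] e0_pos by auto
  define d where "d = min d0 e0"
  have d: "0 < d" "d \<le> e0" "\<And>t z. 0 \<le> t \<Longrightarrow> z \<in> nbhd d G \<Longrightarrow> F t z \<in> nbhd (e0/2) G"
    using d0 e0_pos nbhd_mono[of d d0 G] unfolding d_def by auto
  obtain Ta where Ta: "\<forall>t\<ge>Ta. \<forall>z\<in>nbhd e0 G. F t z \<in> nbhd (d/2) G"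
    using attraction_nbhd[of "d/2"] d(1) by auto
  obtain q :: nat where q: "2 * max T Ta \<le> real q"
    using real_arch_simple by blast
  have "T \<le> max T Ta" by simp
  then have "0 < q" using q \<open>0 < T\<close> by simp
  define \<tau> where "\<tau> = min \<epsilon> (d/2)"
  have \<tau>: "0 < \<tau>" "\<tau> \<le> \<epsilon>" "\<tau> \<le> d/2" "\<tau> \<le> e0/2"
    using \<open>0 < \<epsilon>\<close> d(1,2) unfolding \<tau>_def by auto
  obtain \<delta> where \<delta>: "0 < \<delta>"
    "\<forall>m\<le>2 * q. \<forall>p s. p 0 \<in> nbhd d G \<longrightarrow> pseudo_orbit F \<delta> m s p \<longrightarrow>
       dist (p m) (F (\<Sum>k<m. s k) (p 0)) < \<tau>"
    using near_attractor_tracking[OF d(3) \<tau>(1,4)] by blast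
  have "conley_chain F \<epsilon> T (p 0) (p l) \<and> p l \<in> nbhd d G"
    if "pseudo_orbit F \<delta> l s p" "\<forall>i<l. 1/2 \<le> s i" "q \<le> l" "l \<le> 2 * q" "p 0 \<in> nbhd d G"
    for l p s
  proof (rule conley_jump_into_nbhd)
    let ?t = "\<Sum>k<l. s k"
    have "real l / 2 \<le> ?t"
      using sum_half_steps_ge[of l s] that(2) by simp
    then have t: "T \<le> ?t" "Ta \<le> ?t"
      using q that(3) by (simp_all add: le_max_iff_disj)
    then show "T \<le> ?t" by simp
    have "p 0 \<in> nbhd e0 G"
      using nbhd_mono[OF d(2)] that(5) by blast
    then show "F ?t (p 0) \<in> nbhd (d/2) G"
      using Ta t(2) by blast
    show "dist (p l) (F ?t (p 0)) < \<tau>"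
      using \<delta>(2)[rule_format, OF that(4,5,1)] .
  qed (use \<tau> in auto)
  then show ?thesis
    using d(1) \<delta>(1) \<open>0 < q\<close> by blast
qed

lemma conley_chains_near_attractor:
  assumes "0 < \<epsilon>" and "0 < T"
  shows "\<exists>d>0. \<exists>\<delta>>0. \<exists>q. \<forall>n p s k. pseudo_orbit F \<delta> n s p \<longrightarrow> (\<forall>i<n. 1/2 \<le> s i) \<longrightarrow>
           k + q \<le> n \<longrightarrow> p k \<in> nbhd d G \<longrightarrow> conley_chain F \<epsilon> T (p k) (p n)"
proof -
  obtain d \<delta> q where "0 < d" "0 < \<delta>" "0 < q"
    and block: "\<forall>l p s. pseudo_orbit F \<delta> l s p \<longrightarrow> (\<forall>i<l. 1/2 \<le> s i) \<longrightarrow>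
           q \<le> l \<longrightarrow> l \<le> 2 * q \<longrightarrow> p 0 \<in> nbhd d G \<longrightarrow>
           conley_chain F \<epsilon> T (p 0) (p l) \<and> p l \<in> nbhd d G"
    using near_attractor_blocks[OF assms] by blast
  have "conley_chain F \<epsilon> T (p k) (p n)"
    if po: "pseudo_orbit F \<delta> n s p" and half: "\<forall>i<n. 1/2 \<le> s i" and "k + q \<le> n" "p k \<in> nbhd d G"
    for n p s k
  proof (rule chain_relation_by_blocks[where R="conley_chain F \<epsilon> T" and S="nbhd d G"])
    show "conley_chain F \<epsilon> T x z" if "conley_chain F \<epsilon> T x y" "conley_chain F \<epsilon> T y z" for x y z
      using that by (rule conley_chain_trans)
    fix j l assume jl: "j + l \<le> n" "q \<le> l" "l \<le> 2 * q" "p j \<in> nbhd d G"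
    have "pseudo_orbit F \<delta> l (\<lambda>i. s (j + i)) (\<lambda>i. p (j + i))"
      using pseudo_orbit_mono[OF pseudo_orbit_shift[OF po, of j], of l \<delta>] jl(1) by simp
    moreover have "\<forall>i<l. 1/2 \<le> s (j + i)"
      using half jl(1) by auto
    ultimately show "conley_chain F \<epsilon> T (p j) (p (j + l)) \<and> p (j + l) \<in> nbhd d G"
      using block[rule_format, of l "\<lambda>i. s (j + i)" "\<lambda>i. p (j + i)"] jl by simp
  qed (use that \<open>0 < q\<close> in auto)
  then show ?thesis
    using \<open>0 < d\<close> \<open>0 < \<delta>\<close> by blast
qed

text \<open>The first block of a chain starts at x, possibly far from G, so it is tracked along the
  compact orbit piece of x instead.\<close>

lemma orbit_block:
  assumes "0 < \<epsilon>" and "0 < T" and "0 < d"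
  obtains \<delta> q where "0 < \<delta>"
    and "\<forall>p s. p 0 = x \<longrightarrow> pseudo_orbit F \<delta> q s p \<longrightarrow> (\<forall>i<q. 1/2 \<le> s i) \<longrightarrow>
           conley_chain F \<epsilon> T x (p q) \<and> p q \<in> nbhd d G"
proof -
  obtain Tx where Tx: "\<forall>t\<ge>Tx. F t x \<in> nbhd (d/2) G"
    using attraction_point[of "d/2"] assms(3) by auto
  obtain q :: nat where q: "2 * max T Tx \<le> real q"
    using real_arch_simple by blast
  define \<tau> where "\<tau> = min \<epsilon> (d/2)"
  have \<tau>: "0 < \<tau>" "\<tau> \<le> \<epsilon>" "\<tau> \<le> d/2"
    using assms unfolding \<tau>_def by auto
  obtain \<delta> where "0 < \<delta>" and \<delta>: "\<forall>m\<le>q. \<forall>p s. p 0 = x \<longrightarrow> pseudo_orbit F \<delta> m s p \<longrightarrow>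
      dist (p m) (F (\<Sum>k<m. s k) x) < \<tau>"
    using orbit_tracking[OF \<tau>(1)] by blast
  have "conley_chain F \<epsilon> T x (p q) \<and> p q \<in> nbhd d G"
    if "p 0 = x" "pseudo_orbit F \<delta> q s p" "\<forall>i<q. 1/2 \<le> s i" for p s
  proof (rule conley_jump_into_nbhd)
    let ?t = "\<Sum>k<q. s k"
    have "real q / 2 \<le> ?t"
      using sum_half_steps_ge[of q s] that(3) by simp
    then have t: "T \<le> ?t" "Tx \<le> ?t"
      using q by (simp_all add: le_max_iff_disj)
    then show "T \<le> ?t" by simp
    show "F ?t x \<in> nbhd (d/2) G"
      using Tx t(2) by blast
    show "dist (p q) (F ?t x) < \<tau>"
      using \<delta>[rule_format, of q p s] that(1,2) by simp
  qed (use \<tau> in auto)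
  then show ?thesis
    using that \<open>0 < \<delta>\<close> by blast
qed

lemma step_chains_imp_conley_le:
  assumes "\<And>\<epsilon> L. 0 < \<epsilon> \<Longrightarrow> step_chain F \<epsilon> L x y"
  shows "conley_le F x y"
  unfolding conley_le_def
proof (intro allI impI)
  fix \<epsilon> T :: real assume "0 < \<epsilon>" "0 < T"
  obtain d \<delta> q where "0 < d" "0 < \<delta>"
    and near: "\<forall>n p s k. pseudo_orbit F \<delta> n s p \<longrightarrow> (\<forall>i<n. 1/2 \<le> s i) \<longrightarrow>
         k + q \<le> n \<longrightarrow> p k \<in> nbhd d G \<longrightarrow> conley_chain F \<epsilon> T (p k) (p n)"
    using conley_chains_near_attractor[OF \<open>0 < \<epsilon>\<close> \<open>0 < T\<close>] by blast
  obtain \<delta>' q' where "0 < \<delta>'"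
    and first: "\<forall>p s. p 0 = x \<longrightarrow> pseudo_orbit F \<delta>' q' s p \<longrightarrow> (\<forall>i<q'. 1/2 \<le> s i) \<longrightarrow>
         conley_chain F \<epsilon> T x (p q') \<and> p q' \<in> nbhd d G"
    using orbit_block[OF \<open>0 < \<epsilon>\<close> \<open>0 < T\<close> \<open>0 < d\<close>] by metis
  obtain n p s where chain: "q' + q \<le> n" "p 0 = x" "p n = y"
    "\<forall>i<n. s i \<in> {1/2..1} \<and> dist (F (s i) (p i)) (p (Suc i)) < min \<delta> \<delta>'"
    using assms[of "min \<delta> \<delta>'" "q' + q"] \<open>0 < \<delta>\<close> \<open>0 < \<delta>'\<close> unfolding step_chain_def by auto
  have po: "pseudo_orbit F (min \<delta> \<delta>') n s p"
    using chain(4) unfolding pseudo_orbit_def by auto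
  have half: "\<forall>i<n. 1/2 \<le> s i"
    using chain(4) by auto
  have "pseudo_orbit F \<delta>' q' s p" "\<forall>i<q'. 1/2 \<le> s i"
    using pseudo_orbit_mono[OF po, of q' \<delta>'] half chain(1) by auto
  then have x_block: "conley_chain F \<epsilon> T x (p q')" "p q' \<in> nbhd d G"
    using first[rule_format, of p s] chain(2) by blast+
  have "pseudo_orbit F \<delta> n s p"
    using pseudo_orbit_mono[OF po order_refl, of \<delta>] by simp
  then have "conley_chain F \<epsilon> T (p q') (p n)"
    using near[rule_format, of n s p q'] half chain(1) x_block(2) by simp
  then show "conley_chain F \<epsilon> T x y"
    using conley_chain_trans[OF x_block(1)] chain(3) by simp
qed

lemma shadow_le_imp_conley_le:
  assumes "x \<in> chain_recurrent_set F (shadow_le F)" and "shadow_le F x y"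
  shows "conley_le F x y"
  by (rule step_chains_imp_conley_le) (rule shadow_le_imp_long_step_chains[OF assms])

lemma conley_recurrent_subset_attractor: "chain_recurrent_set F (conley_le F) \<subseteq> G"
  unfolding chain_recurrent_set_def using fixed_point_in_attractor conley_le_imp_mem_attractor by blast

lemma chain_recurrent_sets_eq:
  "chain_recurrent_set F (conley_le F) = chain_recurrent_set F (shadow_le F)"
proof (intro equalityI subsetI)
  fix x assume x: "x \<in> chain_recurrent_set F (conley_le F)"
  show "x \<in> chain_recurrent_set F (shadow_le F)"
  proof (cases "fixed_point F x")
    case False
    then obtain y where xy: "conley_le F x y" and yx: "conley_le F y x"
      using x unfolding chain_recurrent_set_def by blast
    have "shadow_le F x y"
      using conley_le_imp_mem_attractor[OF yx] xy by (rule conley_le_imp_shadow_le)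
    moreover have "shadow_le F y x"
      using conley_le_imp_mem_attractor[OF xy] yx by (rule conley_le_imp_shadow_le)
    ultimately show ?thesis
      unfolding chain_recurrent_set_def by blast
  qed (simp add: chain_recurrent_set_def)
next
  fix x assume x: "x \<in> chain_recurrent_set F (shadow_le F)"
  show "x \<in> chain_recurrent_set F (conley_le F)"
  proof (cases "fixed_point F x")
    case False
    then obtain y where xy: "shadow_le F x y" and yx: "shadow_le F y x"
      using x unfolding chain_recurrent_set_def by blast
    then have y: "y \<in> chain_recurrent_set F (shadow_le F)"
      unfolding chain_recurrent_set_def by blast
    have "conley_le F x y"
      using x xy by (rule shadow_le_imp_conley_le)
    moreover have "conley_le F y x"
      using y yx by (rule shadow_le_imp_conley_le)
    ultimately show ?thesis
      unfolding chain_recurrent_set_def by blast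
  qed (simp add: chain_recurrent_set_def)
qed

lemma conley_le_iff_shadow_le:
  assumes "x \<in> chain_recurrent_set F (conley_le F)"
  shows "conley_le F x y \<longleftrightarrow> shadow_le F x y"
proof
  show "conley_le F x y \<Longrightarrow> shadow_le F x y"
    using assms conley_recurrent_subset_attractor by (intro conley_le_imp_shadow_le) auto
  show "shadow_le F x y \<Longrightarrow> conley_le F x y"
    using assms chain_recurrent_sets_eq by (intro shadow_le_imp_conley_le) auto
qed

end

lemma strong_attractor_exists:
  assumes "semiflow F" and "strong_compact_dynamics F"
  shows "\<exists>G e0. strong_attractor F G e0"
proof -
  obtain G e0 where "global_attractor F G" "0 < e0" "attracts F G (nbhd e0 G)"
    "uniformly_continuous_on ({0..1} \<times> W_set F e0 G) (\<lambda>(t, z). F t z)"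
    using assms(2) unfolding strong_compact_dynamics_def strong_global_attractor_def by blast
  then have "strong_attractor F G e0"
    using assms(1) by (intro strong_attractor.intro semiflow_system.intro strong_attractor_axioms.intro)
  then show ?thesis by blast
qed

section \<open>Nodes and graphs\<close>

lemma is_node_cong:
  assumes "chain_recurrent_set F r1 = chain_recurrent_set F r2"
    and "\<forall>x\<in>chain_recurrent_set F r1. \<forall>y\<in>chain_recurrent_set F r1. r1 x y \<longleftrightarrow> r2 x y"
  shows "is_node F r1 M \<longleftrightarrow> is_node F r2 M"
proof -
  have "mutually_equiv r1 M' \<longleftrightarrow> mutually_equiv r2 M'" if "M' \<subseteq> chain_recurrent_set F r1" for M'
    using assms(2) that unfolding mutually_equiv_def by blast
  then show ?thesis
    unfolding is_node_def assms(1)[symmetric] by (simp cong: conj_cong)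
qed

lemma chain_graph_cong:
  assumes "chain_recurrent_set F r1 = chain_recurrent_set F r2"
    and "\<forall>x\<in>chain_recurrent_set F r1. \<forall>y\<in>chain_recurrent_set F r1. r1 x y \<longleftrightarrow> r2 x y"
  shows "chain_graph F r1 = chain_graph F r2"
proof -
  have nodes: "is_node F r1 M \<longleftrightarrow> is_node F r2 M" for M
    using is_node_cong[OF assms] .
  have edges: "(\<exists>x\<in>M. \<exists>y\<in>N. r1 x y) \<longleftrightarrow> (\<exists>x\<in>M. \<exists>y\<in>N. r2 x y)"
    if "is_node F r2 M" "is_node F r2 N" for M N
  proof -
    have "M \<subseteq> chain_recurrent_set F r1" "N \<subseteq> chain_recurrent_set F r1"
      using that assms(1) unfolding is_node_def by auto
    then have "\<forall>x\<in>M. \<forall>y\<in>N. r1 x y \<longleftrightarrow> r2 x y"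
      using assms(2) by blast
    then show ?thesis by meson
  qed
  show ?thesis
    unfolding chain_graph_def nodes by (simp add: edges cong: conj_cong)
qed

theorem mainTheorem1:
  fixes F :: "real \<Rightarrow> 'a::metric_space \<Rightarrow> 'a"
  assumes "semiflow F" and "strong_compact_dynamics F"
  shows "chain_recurrent_set F (conley_le F) = chain_recurrent_set F (shadow_le F)
    \<and> (\<forall>x\<in>chain_recurrent_set F (conley_le F). \<forall>y\<in>chain_recurrent_set F (conley_le F).
          conley_le F x y \<longleftrightarrow> shadow_le F x y)
    \<and> (\<forall>M. is_node F (conley_le F) M \<longleftrightarrow> is_node F (shadow_le F) M)
    \<and> chain_graph F (conley_le F) = chain_graph F (shadow_le F)"
proof -
  obtain G e0 where "strong_attractor F G e0"
    using strong_attractor_exists[OF assms] by blast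
  then interpret strong_attractor F G e0 .
  have sets: "chain_recurrent_set F (conley_le F) = chain_recurrent_set F (shadow_le F)"
    by (rule chain_recurrent_sets_eq)
  have rel: "\<forall>x\<in>chain_recurrent_set F (conley_le F). \<forall>y\<in>chain_recurrent_set F (conley_le F).
      conley_le F x y \<longleftrightarrow> shadow_le F x y"
    using conley_le_iff_shadow_le by blast
  show ?thesis
    using sets rel is_node_cong[OF sets rel] chain_graph_cong[OF sets rel] by blast
qed

end
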